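(* Let $k$ be an odd integer with $k\ge 5$, let $D$ be a strong $k$-quasi-transitive digraph with $\mathrm{diam}(D)\ge k+2$, let $u,v\in V(D)$ with $d(u,v)=k+2$, and let $P=x_0x_1\ldots x_{k+2}$ be a shortest $(u,v)$-path (so $x_0=u$, $x_{k+2}=v$). Let $O(P)=\{x_1,x_3,\ldots,x_{k+2}\}$ and $E(P)=\{x_0,x_2,\ldots,x_{k+1}\}$. Let $x_t,x_s\in V(P)$ with $s>t$. Then: (1) every vertex of $O(P)$ is adjacent to every vertex of $E(P)$; i.e. $D[V(P)]$ contains as a subdigraph a semicomplete bipartite digraph with bipartition $(O(P),E(P))$; (2) if $s$ and $t$ have different parity, there is a path of length $k-2$ from $x_s$ to $x_t$ in $D[V(P)]$; moreover, for any two distinct vertices $x,y\in V(D)\setminus V(P)$, if $y\rightarrow x_s$ and $x_t\rightarrow x$, then $x$ and $y$ are adjacent; (3) if $s$ and $t$ have the same parity, there is a path of length $k-1$ from $x_s$ to $x_t$ in $D[V(P)]$; moreover, for any $x\in V(D)\setminus V(P)$: if $x\rightarrow x_s$, then $x$ and $x_t$ are adjacent, and $x\rightarrow x_t$ if $s\ge t+4$; if $x_t\rightarrow x$, then $x$ and $x_s$ are adjacent, and $x_s\rightarrow x$ if $s\ge t+4$.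
   Context: All digraphs are finite, without loops or multiple arcs (opposite arcs allowed). $x\rightarrow y$ means $xy\in A(D)$; $x,y$ are adjacent if $x\rightarrow y$ or $y\rightarrow x$. For $k\ge 2$, $D$ is $k$-quasi-transitive if for every path $x_0x_1\ldots x_k$ of length $k$, $x_0$ and $x_k$ are adjacent. $d(x,y)$ is the length of a shortest $(x,y)$-path, $\mathrm{diam}(D)=\max_{x,y}d(x,y)$. $D[S]$ is the induced subdigraph. A semicomplete bipartite digraph has a bipartition $(X,Y)$ with no arcs inside the parts and every vertex of $X$ adjacent to every vertex of $Y$. *)

theory Defs
  imports Main
begin

definition digraph :: "'a set \<Rightarrow> ('a \<times> 'a) set \<Rightarrow> bool" where
  "digraph V A \<longleftrightarrow> finite V \<and> A \<subseteq> V \<times> V \<and> (\<forall>x. (x, x) \<notin> A)"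

definition adjacent :: "('a \<times> 'a) set \<Rightarrow> 'a \<Rightarrow> 'a \<Rightarrow> bool" where
  "adjacent A x y \<longleftrightarrow> (x, y) \<in> A \<or> (y, x) \<in> A"

definition is_path :: "('a \<times> 'a) set \<Rightarrow> 'a list \<Rightarrow> bool" where
  "is_path A p \<longleftrightarrow> p \<noteq> [] \<and> distinct p \<and>
     (\<forall>i. Suc i < length p \<longrightarrow> (p ! i, p ! Suc i) \<in> A)"

definition path_of_len :: "('a \<times> 'a) set \<Rightarrow> 'a \<Rightarrow> 'a \<Rightarrow> nat \<Rightarrow> 'a list \<Rightarrow> bool" where
  "path_of_len A x y n p \<longleftrightarrow> is_path A p \<and> hd p = x \<and> last p = y \<and> length p = Suc n"

definition induced_arcs :: "('a \<times> 'a) set \<Rightarrow> 'a set \<Rightarrow> ('a \<times> 'a) set" where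
  "induced_arcs A S = A \<inter> (S \<times> S)"

definition strong :: "'a set \<Rightarrow> ('a \<times> 'a) set \<Rightarrow> bool" where
  "strong V A \<longleftrightarrow> (\<forall>x\<in>V. \<forall>y\<in>V. \<exists>n p. path_of_len A x y n p)"

definition k_quasi_transitive :: "nat \<Rightarrow> ('a \<times> 'a) set \<Rightarrow> bool" where
  "k_quasi_transitive k A \<longleftrightarrow>
     (\<forall>p. is_path A p \<and> length p = Suc k \<longrightarrow> adjacent A (hd p) (last p))"

text \<open>Distance: length of a shortest (x,y)-path (used only for strong digraphs,
  where such a path always exists).\<close>
definition dist :: "('a \<times> 'a) set \<Rightarrow> 'a \<Rightarrow> 'a \<Rightarrow> nat" where
  "dist A x y = (LEAST n. \<exists>p. path_of_len A x y n p)"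

definition diam :: "'a set \<Rightarrow> ('a \<times> 'a) set \<Rightarrow> nat" where
  "diam V A = Max {dist A x y | x y. x \<in> V \<and> y \<in> V}"

end

theory Submission imports Defs begin

text \<open>Since P is a shortest path, it has no forward chord x_i \<rightarrow> x_j with
  j \<ge> i + 2, and no outside vertex x gives a detour x_t \<rightarrow> x \<rightarrow> x_s with s \<ge> t + 3.
  So whenever k-quasi-transitivity makes the ends x_i, x_j (i + 2 \<le> j) of a path of
  length k through V(P) adjacent, the arc is the backward arc x_j \<rightarrow> x_i.  Gluing
  segments of P with backward arcs already found into paths of length k yields
  x_j \<rightarrow> x_i for every odd j - i \<ge> 3, first for arcs ending at x_0, x_1 or
  starting at x_(k+1), x_(k+2), then in general.  The same gluing gives the paths of
  length k - 2 and k - 1 inside V(P); extending them by outside vertices to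
  paths of length k and applying k-quasi-transitivity once more gives the
  remaining adjacencies.\<close>

lemma is_path_iff_successively:
  "is_path A p \<longleftrightarrow> p \<noteq> [] \<and> distinct p \<and> successively (\<lambda>x y. (x, y) \<in> A) p"
  unfolding is_path_def successively_conv_nth by blast

lemma is_path_singleton [simp]: "is_path A [x]"
  by (simp add: is_path_def)

lemma is_path_append:
  assumes "p \<noteq> []" "q \<noteq> []"
  shows "is_path A (p @ q) \<longleftrightarrow>
    is_path A p \<and> is_path A q \<and> set p \<inter> set q = {} \<and> (last p, hd q) \<in> A"
  using assms by (auto simp: is_path_iff_successively successively_append_iff)

lemma is_path_induced_arcsD: "is_path (induced_arcs A S) p \<Longrightarrow> is_path A p"
  by (auto simp: is_path_def induced_arcs_def)

lemma is_path_Cons: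
  "q \<noteq> [] \<Longrightarrow> is_path A (x # q) \<longleftrightarrow> x \<notin> set q \<and> (x, hd q) \<in> A \<and> is_path A q"
  using is_path_append[of "[x]" q A] by auto

lemma is_path_snoc:
  "p \<noteq> [] \<Longrightarrow> is_path A (p @ [x]) \<longleftrightarrow> x \<notin> set p \<and> (last p, x) \<in> A \<and> is_path A p"
  using is_path_append[of p "[x]" A] by auto

lemma dist_le_path_length: "path_of_len A x y m p \<Longrightarrow> dist A x y \<le> m"
  unfolding dist_def by (rule Least_le) blast

lemma k_quasi_transitive_adjacent:
  "k_quasi_transitive k A \<Longrightarrow> is_path A p \<Longrightarrow> length p = Suc k \<Longrightarrow> adjacent A (hd p) (last p)"
  unfolding k_quasi_transitive_def by blast

definition seg :: "nat \<Rightarrow> nat \<Rightarrow> nat list" where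
  "seg a b = [a..<Suc b]"

lemma seg_simps [simp]:
  "a \<le> b \<Longrightarrow> seg a b \<noteq> []"
  "a \<le> b \<Longrightarrow> hd (seg a b) = a"
  "a \<le> b \<Longrightarrow> last (seg a b) = b"
  "set (seg a b) = {a..b}"
  "length (seg a b) = Suc b - a"
  "distinct (seg a b)"
  by (auto simp: seg_def simp del: upt_Suc)

locale shortest_path =
  fixes A :: "('a \<times> 'a) set" and u v :: 'a and n :: nat and P :: "'a list"
  assumes path: "path_of_len A u v n P"
    and shortest: "dist A u v = n"
begin

abbreviation arc :: "nat \<Rightarrow> nat \<Rightarrow> bool" where
  "arc i j \<equiv> (P ! i, P ! j) \<in> A"

lemma length_P: "length P = Suc n"
  using path by (simp add: path_of_len_def)

lemma distinct_P: "distinct P"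
  using path by (simp add: path_of_len_def is_path_def)

lemma P_nonempty: "P \<noteq> []"
  using length_P by auto

lemma first_P: "P ! 0 = u"
  using path P_nonempty by (simp add: path_of_len_def hd_conv_nth)

lemma last_P: "P ! n = v"
  using path P_nonempty length_P by (simp add: path_of_len_def last_conv_nth)

lemma arc_Suc: "i < n \<Longrightarrow> arc i (Suc i)"
  using path length_P by (auto simp: path_of_len_def is_path_def)

lemma inj_on_nth_P: "inj_on ((!) P) {..n}"
  using distinct_P length_P by (intro inj_on_nth) auto

lemma shortest_length: "path_of_len A u v m q \<Longrightarrow> n \<le> m"
  using dist_le_path_length shortest by fastforce

definition index_path :: "nat list \<Rightarrow> bool" where
  "index_path l \<longleftrightarrow> l \<noteq> [] \<and> distinct l \<and> set l \<subseteq> {..n} \<and> successively arc l"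

lemma index_path_nonempty: "index_path l \<Longrightarrow> l \<noteq> []"
  by (simp add: index_path_def)

lemma index_path_seg: "a \<le> b \<Longrightarrow> b \<le> n \<Longrightarrow> index_path (seg a b)"
  unfolding index_path_def seg_def successively_conv_nth
  by (auto intro: arc_Suc simp del: upt_Suc)

lemma index_path_append:
  "index_path l1 \<Longrightarrow> index_path l2 \<Longrightarrow> set l1 \<inter> set l2 = {} \<Longrightarrow> arc (last l1) (hd l2)
    \<Longrightarrow> index_path (l1 @ l2)"
  by (auto simp: index_path_def successively_append_iff)

lemma index_path_seg_seg:
  "c \<le> d \<Longrightarrow> d < a \<Longrightarrow> a \<le> b \<Longrightarrow> b \<le> n \<Longrightarrow> arc b c \<Longrightarrow> index_path (seg a b @ seg c d)"
  by (intro index_path_append index_path_seg) auto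

lemma index_path_seg_seg_seg:
  "e \<le> f \<Longrightarrow> f < c \<Longrightarrow> c \<le> d \<Longrightarrow> d < a \<Longrightarrow> a \<le> b \<Longrightarrow> b \<le> n \<Longrightarrow> arc b c \<Longrightarrow> arc d e
    \<Longrightarrow> index_path (seg a b @ seg c d @ seg e f)"
  by (intro index_path_append index_path_seg) auto

lemma path_of_index_path:
  assumes "index_path l"
  shows "path_of_len (induced_arcs A (set P)) (P ! hd l) (P ! last l) (length l - 1) (map ((!) P) l)"
proof -
  have indices: "l \<noteq> []" "distinct l" "set l \<subseteq> {..n}" "successively arc l"
    using assms by (auto simp: index_path_def)
  then have "inj_on ((!) P) (set l)"
    by (intro inj_on_subset[OF inj_on_nth_P])
  then have "distinct (map ((!) P) l)"
    using indices by (simp add: distinct_map)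
  moreover have "successively (\<lambda>x y. (x, y) \<in> induced_arcs A (set P)) (map ((!) P) l)"
    unfolding successively_map using indices length_P
    by (auto simp: induced_arcs_def elim!: successively_mono)
  ultimately show ?thesis
    using indices by (simp add: path_of_len_def is_path_iff_successively hd_map last_map)
qed

lemma is_path_of_index_path:
  assumes "index_path l"
  shows "is_path A (map ((!) P) l)" "set (map ((!) P) l) \<subseteq> set P"
    "hd (map ((!) P) l) = P ! hd l" "last (map ((!) P) l) = P ! last l"
  using path_of_index_path[OF assms] assms length_P
  by (auto simp: path_of_len_def index_path_def dest: is_path_induced_arcsD)

lemma no_forward_chord:
  assumes "i + 2 \<le> j" "j \<le> n"
  shows "\<not> arc i j"
proof
  assume "arc i j"
  with assms have "index_path (seg 0 i @ seg j n)"
    by (intro index_path_append index_path_seg) auto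
  from path_of_index_path[OF this] have "path_of_len A u v (i + 1 + n - j) (map ((!) P) (seg 0 i @ seg j n))"
    using assms first_P last_P by (auto simp: path_of_len_def dest: is_path_induced_arcsD)
  from shortest_length[OF this] assms show False by linarith
qed

lemma no_short_detour:
  assumes "x \<notin> set P" "(P ! t, x) \<in> A" "(x, P ! s) \<in> A" "t < s" "s \<le> n"
  shows "s \<le> t + 2"
proof (rule ccontr)
  assume far: "\<not> s \<le> t + 2"
  let ?p = "map ((!) P) (seg 0 t)" and ?q = "map ((!) P) (seg s n)"
  have p: "is_path A ?p" "set ?p \<subseteq> set P" "last ?p = P ! t"
    and q: "is_path A ?q" "set ?q \<subseteq> set P" "hd ?q = P ! s"
    using assms is_path_of_index_path[OF index_path_seg] by auto
  have "(!) P ` {0..t} \<inter> (!) P ` {s..n} = (!) P ` ({0..t} \<inter> {s..n})"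
    using inj_on_nth_P assms by (intro inj_on_image_Int[symmetric]) auto
  then have "set ?p \<inter> set ?q = {}"
    using assms by auto
  with p q assms have "is_path A (?p @ x # ?q)"
    by (auto simp: is_path_append is_path_Cons)
  then have "path_of_len A u v (t + 2 + n - s) (?p @ x # ?q)"
    using assms first_P last_P by (auto simp: path_of_len_def hd_map last_map)
  from shortest_length[OF this] assms(4,5) far show False by linarith
qed

end

locale qt_shortest_path = shortest_path A u v "k + 2" P
  for A :: "('a \<times> 'a) set" and u v :: 'a and k :: nat and P :: "'a list" +
  assumes odd_k: "odd k" and k_ge_5: "5 \<le> k"
    and quasi_transitive: "k_quasi_transitive k A"
begin

lemma adjacent_ends_of_index_path:
  assumes "index_path l" "length l = Suc k"
  shows "adjacent A (P ! hd l) (P ! last l)"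
  using k_quasi_transitive_adjacent[OF quasi_transitive is_path_of_index_path(1)[OF assms(1)]]
    is_path_of_index_path[OF assms(1)] assms(2) by simp

lemma back_arc_of_index_path:
  assumes "index_path l" "length l = Suc k" "hd l = j" "last l = i" "i + 2 \<le> j" "j \<le> k + 2"
  shows "arc j i"
  using adjacent_ends_of_index_path[OF assms(1,2)] no_forward_chord[of i j] assms(3-6)
  by (auto simp: adjacent_def)

lemma back_arc_span_k:
  assumes "i \<le> 2"
  shows "arc (i + k) i"
proof -
  have "adjacent A (P ! i) (P ! (i + k))"
    using adjacent_ends_of_index_path[OF index_path_seg[of i "i + k"]] assms by simp
  with no_forward_chord[of i "i + k"] assms k_ge_5 show ?thesis
    by (auto simp: adjacent_def)
qed

lemma back_arc_last_first: "arc (k + 2) 0"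
proof -
  have "index_path (seg (k + 2) (k + 2) @ seg 2 k @ seg 0 0)"
    using k_ge_5 back_arc_span_k[of 2] back_arc_span_k[of 0]
    by (intro index_path_seg_seg_seg) (simp_all add: add.commute)
  then show ?thesis
    by (rule back_arc_of_index_path) (use k_ge_5 in simp_all)
qed

lemma back_arc_span_3:
  assumes "i + 3 \<le> k + 2"
  shows "arc (i + 3) i"
proof -
  have "index_path (seg (i + 3) (k + 2) @ seg 0 i)"
    using assms back_arc_last_first by (intro index_path_seg_seg) simp_all
  then show ?thesis
    by (rule back_arc_of_index_path) (use assms in simp_all)
qed

lemma back_arc_to_start:
  assumes "i \<le> 1" "odd (j - i)" "i + 3 \<le> j" "j \<le> k + 2"
  shows "arc j i"
  using assms(2-4)
proof (induction j rule: less_induct)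
  case (less j)
  show ?case
  proof (cases "j = i + 3")
    case True
    with less.prems back_arc_span_3[of i] show ?thesis by simp
  next
    case False
    with less.prems have "i + 5 \<le> j" "odd (j - 2 - i)"
      by presburger+
    with less.IH[of "j - 2"] less.prems have "arc (j - 2) i"
      by simp
    with \<open>i + 5 \<le> j\<close> assms(1) less.prems back_arc_span_k[of 2]
    have "index_path (seg j (k + 2) @ seg 2 (j - 2) @ seg i i)"
      by (intro index_path_seg_seg_seg) (simp_all add: add.commute)
    then show ?thesis
      by (rule back_arc_of_index_path) (use \<open>i + 5 \<le> j\<close> less.prems in simp_all)
  qed
qed

lemma back_arc_from_end:
  assumes "k + 1 \<le> j" "odd (j - i)" "i + 3 \<le> j" "j \<le> k + 2"
  shows "arc j i"
  using assms(2,3)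
proof (induction "j - i" arbitrary: i rule: less_induct)
  case less
  show ?case
  proof (cases "j = i + 3")
    case True
    with back_arc_span_3[of i] assms(4) show ?thesis by simp
  next
    case False
    with less.prems have "i + 5 \<le> j" "odd (j - (i + 2))"
      by presburger+
    with less.hyps[of "i + 2"] have "arc j (i + 2)"
      by simp
    with \<open>i + 5 \<le> j\<close> assms back_arc_span_k[of 0]
    have "index_path (seg j j @ seg (i + 2) k @ seg 0 i)"
      by (intro index_path_seg_seg_seg) simp_all
    then show ?thesis
      by (rule back_arc_of_index_path) (use \<open>i + 5 \<le> j\<close> assms in simp_all)
  qed
qed

lemma back_arc:
  assumes "odd (j - i)" "i + 3 \<le> j" "j \<le> k + 2"
  shows "arc j i"
proof -
  consider "i \<le> 1" | "k + 1 \<le> j" | "2 \<le> i" "j \<le> k"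
    by linarith
  then show ?thesis
  proof cases
    case 1
    with back_arc_to_start assms show ?thesis by blast
  next
    case 2
    with back_arc_from_end assms show ?thesis by blast
  next
    case 3
    show ?thesis
    proof (cases "j = i + 3")
      case True
      with back_arc_span_3[of i] assms show ?thesis by simp
    next
      case False
      with assms have "i + 5 \<le> j"
        by presburger
      show ?thesis
      proof (cases "odd i")
        case True
        have "arc (k + 2) (i + 1)"
          using back_arc_from_end[of "k + 2" "i + 1"] 3 True odd_k assms by simp
        moreover have "arc (j - 3) 0"
          using back_arc_to_start[of 0 "j - 3"] 3 True \<open>i + 5 \<le> j\<close> assms by simp
        ultimately have "index_path (seg j (k + 2) @ seg (i + 1) (j - 3) @ seg 0 i)"
          using 3 \<open>i + 5 \<le> j\<close> by (intro index_path_seg_seg_seg) auto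
        then show ?thesis
          by (rule back_arc_of_index_path) (use 3 \<open>i + 5 \<le> j\<close> in auto)
      next
        case False
        have "arc (k + 1) (i + 1)"
          using back_arc_from_end[of "k + 1" "i + 1"] 3 False odd_k assms by simp
        moreover have "arc (j - 1) 1"
          using back_arc_to_start[of 1 "j - 1"] 3 False \<open>i + 5 \<le> j\<close> assms by simp
        ultimately have "index_path (seg j (k + 1) @ seg (i + 1) (j - 1) @ seg 1 i)"
          using 3 \<open>i + 5 \<le> j\<close> by (intro index_path_seg_seg_seg) auto
        then show ?thesis
          by (rule back_arc_of_index_path) (use 3 \<open>i + 5 \<le> j\<close> in auto)
      qed
    qed
  qed
qed

lemma index_path_odd_gap:
  assumes "t < s" "s \<le> k + 2" "odd (s - t)"
  obtains l where "index_path l" "hd l = s" "last l = t" "length l = k - 1"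
proof -
  consider "s = t + 1" | "s = t + 3" | "s = t + 5" | "t + 7 \<le> s"
    using assms by atomize_elim presburger
  then show thesis
  proof cases
    case 1
    show thesis
    proof (cases "k \<le> s + 2")
      case True
      have "arc s (s + 2 - k)"
        using 1 True k_ge_5 odd_k assms by (intro back_arc) auto
      with 1 True k_ge_5 assms show thesis
        by (intro that[of "seg s s @ seg (s + 2 - k) t"] index_path_seg_seg) auto
    next
      case False
      have "arc (k - 2) 0"
        using k_ge_5 odd_k by (intro back_arc) auto
      with 1 False k_ge_5 assms show thesis
        by (intro that[of "seg s (k - 2) @ seg 0 t"] index_path_seg_seg) auto
    qed
  next
    case 2
    show thesis
    proof (cases "2 \<le> t")
      case True
      have "arc (k + 2) 2"
        using k_ge_5 odd_k by (intro back_arc) auto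
      with 2 True k_ge_5 assms show thesis
        by (intro that[of "seg s (k + 2) @ seg 2 t"] index_path_seg_seg) auto
    next
      case False
      have "arc k 0"
        using k_ge_5 odd_k by (intro back_arc) auto
      with 2 False k_ge_5 assms show thesis
        by (intro that[of "seg s k @ seg 0 t"] index_path_seg_seg) auto
    qed
  next
    case 3
    with back_arc_last_first k_ge_5 assms show thesis
      by (intro that[of "seg s (k + 2) @ seg 0 t"] index_path_seg_seg) auto
  next
    case 4
    show thesis
    proof (cases "even t")
      case True
      have "arc (k + 2) (t + 2)"
        using 4 True odd_k assms by (intro back_arc) auto
      moreover have "arc (s - 4) 0"
        using 4 True assms by (intro back_arc) auto
      moreover have "index_path (seg s (k + 2) @ seg (t + 2) (s - 4) @ seg 0 t)"
        using calculation 4 assms by (intro index_path_seg_seg_seg) auto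
      ultimately show thesis
        using 4 k_ge_5 assms by (intro that) auto
    next
      case False
      have "arc (k + 2) (t + 1)"
        using 4 False odd_k assms by (intro back_arc) auto
      moreover have "arc (s - 5) 0"
        using 4 False assms odd_pos[of t] by (intro back_arc) auto
      moreover have "index_path (seg s (k + 2) @ seg (t + 1) (s - 5) @ seg 0 t)"
        using calculation 4 assms by (intro index_path_seg_seg_seg) auto
      ultimately show thesis
        using 4 k_ge_5 assms by (intro that) auto
    qed
  qed
qed

lemma index_path_even_gap:
  assumes "t < s" "s \<le> k + 2" "even (s - t)"
  obtains l where "index_path l" "hd l = s" "last l = t" "length l = k"
proof -
  consider "s = t + 2" | "s = t + 4" | "t + 6 \<le> s"
    using assms by atomize_elim presburger
  then show thesis
  proof cases
    case 1
    show thesis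
    proof (cases "2 \<le> t")
      case True
      have "arc (k + 2) 2"
        using k_ge_5 odd_k by (intro back_arc) auto
      with 1 True k_ge_5 assms show thesis
        by (intro that[of "seg s (k + 2) @ seg 2 t"] index_path_seg_seg) auto
    next
      case False
      have "arc k 0"
        using k_ge_5 odd_k by (intro back_arc) auto
      with 1 False k_ge_5 assms show thesis
        by (intro that[of "seg s k @ seg 0 t"] index_path_seg_seg) auto
    qed
  next
    case 2
    with back_arc_last_first k_ge_5 assms show thesis
      by (intro that[of "seg s (k + 2) @ seg 0 t"] index_path_seg_seg) auto
  next
    case 3
    show thesis
    proof (cases "even t")
      case True
      have "arc (k + 2) (t + 2)"
        using 3 True odd_k assms by (intro back_arc) auto
      moreover have "arc (s - 3) 0"
        using 3 True assms by (intro back_arc) auto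
      moreover have "index_path (seg s (k + 2) @ seg (t + 2) (s - 3) @ seg 0 t)"
        using calculation 3 assms by (intro index_path_seg_seg_seg) auto
      ultimately show thesis
        using 3 k_ge_5 assms by (intro that) auto
    next
      case False
      have "arc (k + 2) (t + 1)"
        using 3 False odd_k assms by (intro back_arc) auto
      moreover have "arc (s - 4) 0"
        using 3 False assms odd_pos[of t] by (intro back_arc) auto
      moreover have "index_path (seg s (k + 2) @ seg (t + 1) (s - 4) @ seg 0 t)"
        using calculation 3 assms by (intro index_path_seg_seg_seg) auto
      ultimately show thesis
        using 3 k_ge_5 assms by (intro that) auto
    qed
  qed
qed

lemma induced_path_odd_gap:
  assumes "t < s" "s \<le> k + 2" "odd (s - t)"
  shows "\<exists>q. path_of_len (induced_arcs A (set P)) (P ! s) (P ! t) (k - 2) q"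
proof -
  obtain l where "index_path l" "hd l = s" "last l = t" "length l = k - 1"
    using index_path_odd_gap assms by blast
  with path_of_index_path[of l] show ?thesis
    by (auto simp: numeral_2_eq_2)
qed

lemma induced_path_even_gap:
  assumes "t < s" "s \<le> k + 2" "even (s - t)"
  shows "\<exists>q. path_of_len (induced_arcs A (set P)) (P ! s) (P ! t) (k - 1) q"
proof -
  obtain l where "index_path l" "hd l = s" "last l = t" "length l = k"
    using index_path_even_gap assms by blast
  with path_of_index_path[of l] show ?thesis
    by auto
qed

lemma adjacent_outside_odd_gap:
  assumes "t < s" "s \<le> k + 2" "odd (s - t)"
    and "x \<notin> set P" "y \<notin> set P" "x \<noteq> y" "(y, P ! s) \<in> A" "(P ! t, x) \<in> A"
  shows "adjacent A x y"
proof -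
  obtain l where l: "index_path l" "hd l = s" "last l = t" "length l = k - 1"
    using index_path_odd_gap assms(1-3) by blast
  let ?q = "map ((!) P) l"
  have "l \<noteq> []"
    using l(1) by (rule index_path_nonempty)
  with is_path_of_index_path[OF l(1)] l assms(4-8) have "is_path A (y # ?q @ [x])"
    by (auto simp: is_path_Cons is_path_snoc)
  moreover have "length (y # ?q @ [x]) = Suc k"
    using l(4) k_ge_5 by simp
  ultimately show ?thesis
    using k_quasi_transitive_adjacent[OF quasi_transitive] by (fastforce simp: adjacent_def)
qed

lemma in_neighbour_even_gap:
  assumes "t < s" "s \<le> k + 2" "even (s - t)" "x \<notin> set P" "(x, P ! s) \<in> A"
  shows "adjacent A x (P ! t)" and "t + 4 \<le> s \<Longrightarrow> (x, P ! t) \<in> A"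
proof -
  obtain l where l: "index_path l" "hd l = s" "last l = t" "length l = k"
    using index_path_even_gap assms(1-3) by blast
  let ?q = "map ((!) P) l"
  have "l \<noteq> []"
    using l(1) by (rule index_path_nonempty)
  with is_path_of_index_path[OF l(1)] l assms(4,5) have "is_path A (x # ?q)"
    by (auto simp: is_path_Cons)
  with k_quasi_transitive_adjacent[OF quasi_transitive] l \<open>l \<noteq> []\<close>
  show adjacent: "adjacent A x (P ! t)"
    by (fastforce simp: last_map)
  show "(x, P ! t) \<in> A" if "t + 4 \<le> s"
    using adjacent no_short_detour[of x t s] assms that by (auto simp: adjacent_def)
qed

lemma out_neighbour_even_gap:
  assumes "t < s" "s \<le> k + 2" "even (s - t)" "x \<notin> set P" "(P ! t, x) \<in> A"
  shows "adjacent A x (P ! s)" and "t + 4 \<le> s \<Longrightarrow> (P ! s, x) \<in> A"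
proof -
  obtain l where l: "index_path l" "hd l = s" "last l = t" "length l = k"
    using index_path_even_gap assms(1-3) by blast
  let ?q = "map ((!) P) l"
  have "l \<noteq> []"
    using l(1) by (rule index_path_nonempty)
  with is_path_of_index_path[OF l(1)] l assms(4,5) have "is_path A (?q @ [x])"
    by (auto simp: is_path_snoc)
  with k_quasi_transitive_adjacent[OF quasi_transitive] l \<open>l \<noteq> []\<close>
  show adjacent: "adjacent A x (P ! s)"
    by (fastforce simp: hd_map adjacent_def)
  show "(P ! s, x) \<in> A" if "t + 4 \<le> s"
    using adjacent no_short_detour[of x t s] assms that by (auto simp: adjacent_def)
qed

lemma adjacent_odd_even:
  assumes "i \<le> k + 2" "j \<le> k + 2" "odd i" "even j"
  shows "adjacent A (P ! i) (P ! j)"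
proof -
  consider "j = i + 1" | "i = j + 1" | "i + 3 \<le> j" | "j + 3 \<le> i"
    using assms by atomize_elim presburger
  then show ?thesis
  proof cases
    case 1
    with arc_Suc[of i] assms show ?thesis by (simp add: adjacent_def)
  next
    case 2
    with arc_Suc[of j] assms show ?thesis by (simp add: adjacent_def)
  next
    case 3
    with back_arc[of j i] assms show ?thesis by (simp add: adjacent_def)
  next
    case 4
    with back_arc[of i j] assms show ?thesis by (simp add: adjacent_def)
  qed
qed

end

theorem lemma2p3:
  fixes V :: "'a set" and A :: "('a \<times> 'a) set" and k :: nat
    and u v :: 'a and P :: "'a list" and s t :: nat
  assumes D: "digraph V A"
    and k: "odd k" "k \<ge> 5"
    and str: "strong V A"
    and qt: "k_quasi_transitive k A"
    and dm: "diam V A \<ge> k + 2"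
    and uv: "u \<in> V" "v \<in> V" "dist A u v = k + 2"
    and P: "path_of_len A u v (k + 2) P"
    and ts: "t < s" "s \<le> k + 2"
  shows
    "(\<forall>i j. i \<le> k + 2 \<and> j \<le> k + 2 \<and> odd i \<and> even j \<longrightarrow> adjacent A (P ! i) (P ! j))
     \<and> (odd (s + t) \<longrightarrow>
          (\<exists>q. path_of_len (induced_arcs A (set P)) (P ! s) (P ! t) (k - 2) q)
        \<and> (\<forall>x y. x \<in> V - set P \<and> y \<in> V - set P \<and> x \<noteq> y
               \<and> (y, P ! s) \<in> A \<and> (P ! t, x) \<in> A \<longrightarrow> adjacent A x y))
     \<and> (even (s + t) \<longrightarrow>
          (\<exists>q. path_of_len (induced_arcs A (set P)) (P ! s) (P ! t) (k - 1) q)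
        \<and> (\<forall>x \<in> V - set P.
              ((x, P ! s) \<in> A \<longrightarrow> adjacent A x (P ! t) \<and> (s \<ge> t + 4 \<longrightarrow> (x, P ! t) \<in> A))
            \<and> ((P ! t, x) \<in> A \<longrightarrow> adjacent A x (P ! s) \<and> (s \<ge> t + 4 \<longrightarrow> (P ! s, x) \<in> A))))"
proof -
  interpret qt_shortest_path A u v k P
    using k qt uv(3) P by unfold_locales auto
  have "odd (s + t) \<longleftrightarrow> odd (s - t)"
    using ts by presburger
  then show ?thesis
    using adjacent_odd_even induced_path_odd_gap[OF ts] adjacent_outside_odd_gap[OF ts]
      induced_path_even_gap[OF ts] in_neighbour_even_gap[OF ts] out_neighbour_even_gap[OF ts]
    by auto
qed

end
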